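(* Let $A\in\mathbb{R}^{n\times n}$, $B\in\mathbb{R}^{n\times m}$, $C\in\mathbb{R}^{p\times n}$ with $(A,C)$ observable, $\ell$ its observability index, and $\mathbf{A}_\ell,\mathbf{B}_\ell,Z_\ell$ as in the context. For each $\hat x\in\mathbb{R}^n$ and each sequence $\{u(k)\}_{k=0}^\infty$ there exists $\hat\xi$ such that the solution $x(\cdot)$ of $x^+=Ax+Bu$ with $x(0)=\hat x$, its output $y(\cdot)=Cx(\cdot)$, and the solution $\xi(\cdot)$ of $\xi^+=\mathbf{A}_\ell\xi+\mathbf{B}_\ell v$ with $\xi(\ell)=\hat\xi$ and input $v(k)=u(k)$ for $k\ge\ell$ satisfy, for all $k\ge\ell$, $\xi(k)=(y(k-\ell),\dots,y(k-1),u(k-\ell),\dots,u(k-1))$ and $y(k)=Z_\ell\xi(k)$.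
   Context: $(v_1,\dots,v_r)$ denotes a stacked column vector. The observability index $\ell$ is the smallest $l$ with $\operatorname{rank}[C;CA;\dots;CA^{l-1}]=n$. Define $\mathcal{O}_\ell=[C;CA;\dots;CA^{\ell-1}]$; $\mathcal{T}_\ell\in\mathbb{R}^{p\ell\times m\ell}$ block lower triangular with $(i,j)$ block $CA^{i-j-1}B$ if $i>j$ and $0$ otherwise; $\mathcal{R}_\ell=[A^{\ell-1}B\ \cdots\ AB\ B]$; $\mathcal{O}_\ell^{L}$ a fixed left inverse of $\mathcal{O}_\ell$. $\mathbf{F}_\ell=\mathrm{blockdiag}(S_p,S_m)$ where $S_q\in\mathbb{R}^{q\ell\times q\ell}$ has blocks $I_q$ at block positions $(i,i+1)$, $i=1,\dots,\ell-1$, zeros elsewhere; $\mathbf{L}_\ell\in\mathbb{R}^{(p\ell+m\ell)\times p}$ has $I_p$ in rows $p\ell-p+1,\dots,p\ell$, zeros elsewhere; $\mathbf{B}_\ell\in\mathbb{R}^{(p\ell+m\ell)\times m}$ has $I_m$ in its last $m$ rows, zeros elsewhere. $Z_\ell=[CA^\ell\mathcal{O}_\ell^L\ \ C\mathcal{R}_\ell-CA^\ell\mathcal{O}_\ell^L\mathcal{T}_\ell]$, $\mathbf{A}_\ell=\mathbf{F}_\ell+\mathbf{L}_\ell Z_\ell$. *)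

theory Defs
  imports "Jordan_Normal_Form.DL_Rank"
begin

text \<open>Observability matrix O_l = [C; CA; ...; CA^(l-1)], of size (p*l) x n.\<close>
definition obs_mat :: "real mat \<Rightarrow> real mat \<Rightarrow> nat \<Rightarrow> real mat" where
  "obs_mat A C l = mat (dim_row C * l) (dim_col A)
     (\<lambda>(i,j). (C * A ^\<^sub>m (i div dim_row C)) $$ (i mod dim_row C, j))"

definition observable :: "real mat \<Rightarrow> real mat \<Rightarrow> bool" where
  "observable A C = (\<exists>l. vec_space.rank (dim_row C * l) (obs_mat A C l) = dim_col A)"

definition obs_index :: "real mat \<Rightarrow> real mat \<Rightarrow> nat" where
  "obs_index A C = (LEAST l. vec_space.rank (dim_row C * l) (obs_mat A C l) = dim_col A)"

text \<open>T_l: (p*l) x (m*l) block lower triangular, block (i,j) = C A^(i-j-1) B for i>j.\<close>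
definition toeplitz_mat :: "real mat \<Rightarrow> real mat \<Rightarrow> real mat \<Rightarrow> nat \<Rightarrow> real mat" where
  "toeplitz_mat A B C l = mat (dim_row C * l) (dim_col B * l)
     (\<lambda>(i,j). let bi = i div dim_row C; bj = j div dim_col B in
        if bi > bj then (C * A ^\<^sub>m (bi - bj - 1) * B) $$ (i mod dim_row C, j mod dim_col B)
        else 0)"

text \<open>R_l = [A^(l-1) B, ..., A B, B], of size n x (m*l).\<close>
definition reach_mat :: "real mat \<Rightarrow> real mat \<Rightarrow> nat \<Rightarrow> real mat" where
  "reach_mat A B l = mat (dim_row B) (dim_col B * l)
     (\<lambda>(i,j). (A ^\<^sub>m (l - 1 - j div dim_col B) * B) $$ (i, j mod dim_col B))"

definition Z_mat :: "real mat \<Rightarrow> real mat \<Rightarrow> real mat \<Rightarrow> real mat \<Rightarrow> nat \<Rightarrow> real mat" where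
  "Z_mat A B C OL l =
     (let M1 = C * A ^\<^sub>m l * OL;
          M2 = C * reach_mat A B l - C * A ^\<^sub>m l * OL * toeplitz_mat A B C l;
          pl = dim_row C * l
      in mat (dim_row C) (pl + dim_col B * l)
           (\<lambda>(i,j). if j < pl then M1 $$ (i,j) else M2 $$ (i, j - pl)))"

definition shift_mat :: "nat \<Rightarrow> nat \<Rightarrow> real mat" where
  "shift_mat q l = mat (q*l) (q*l)
     (\<lambda>(i,j). if j div q = i div q + 1 \<and> j mod q = i mod q then 1 else 0)"

definition F_mat :: "nat \<Rightarrow> nat \<Rightarrow> nat \<Rightarrow> real mat" where
  "F_mat p m l = four_block_mat (shift_mat p l) (0\<^sub>m (p*l) (m*l)) (0\<^sub>m (m*l) (p*l)) (shift_mat m l)"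

definition L_mat :: "nat \<Rightarrow> nat \<Rightarrow> nat \<Rightarrow> real mat" where
  "L_mat p m l = mat (p*l + m*l) p
     (\<lambda>(i,j). if p*l - p \<le> i \<and> i < p*l \<and> i - (p*l - p) = j then 1 else 0)"

definition Bl_mat :: "nat \<Rightarrow> nat \<Rightarrow> nat \<Rightarrow> real mat" where
  "Bl_mat p m l = mat (p*l + m*l) m
     (\<lambda>(i,j). if p*l + m*l - m \<le> i \<and> i - (p*l + m*l - m) = j then 1 else 0)"

definition Al_mat :: "real mat \<Rightarrow> real mat \<Rightarrow> real mat \<Rightarrow> real mat \<Rightarrow> nat \<Rightarrow> real mat" where
  "Al_mat A B C OL l = F_mat (dim_row C) (dim_col B) l + L_mat (dim_row C) (dim_col B) l * Z_mat A B C OL l"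

definition past_window :: "nat \<Rightarrow> nat \<Rightarrow> nat \<Rightarrow> (nat \<Rightarrow> real vec) \<Rightarrow> (nat \<Rightarrow> real vec) \<Rightarrow> nat \<Rightarrow> real vec" where
  "past_window p m l y u k = vec (p*l + m*l)
     (\<lambda>i. if i < p*l then y (k - l + i div p) $ (i mod p)
          else u (k - l + (i - p*l) div m) $ ((i - p*l) mod m))"

end

theory Submission
  imports Defs
begin

(* Fix a time k >= l and put s = k - l. Over the window s, ..., k - 1 the stacked outputs Y and
   inputs U satisfy Y = O_l x(s) + T_l U, while x(k) = A^l x(s) + R_l U. Since O_l^L O_l = I,
   the window determines the state, x(s) = O_l^L (Y - T_l U), and therefore
   y(k) = C x(k) = C A^l O_l^L Y + (C R_l - C A^l O_l^L T_l) U = Z_l (Y, U).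
   Moving the window one step shifts the blocks of (Y, U) by F_l and appends y(k) and u(k)
   through L_l and B_l; with y(k) = Z_l (Y, U) this is exactly xi(k+1) = A_l xi(k) + B_l u(k).
   So the window of the true trajectory solves the recursion for xi, and taking xi_hat to be its
   value at time l forces xi to be that window at all times k >= l. *)

lemma sum_lessThan_mult:
  fixes f :: "nat \<Rightarrow> 'a::comm_monoid_add"
  shows "(\<Sum>i<q * l. f i) = (\<Sum>b<l. \<Sum>c<q. f (b * q + c))"
proof (induction l)
  case (Suc l)
  have "(\<Sum>i<q * Suc l. f i) = (\<Sum>i = 0..<l * q. f i) + (\<Sum>i = l * q..<l * q + q. f i)"
    by (simp add: atLeast0LessThan[symmetric] sum.atLeastLessThan_concat algebra_simps)
  also have "(\<Sum>i = l * q..<l * q + q. f i) = (\<Sum>c<q. f (l * q + c))"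
    using sum.shift_bounds_nat_ivl[of f 0 "l * q" q] by (simp add: atLeast0LessThan add.commute)
  finally show ?case
    using Suc by (simp add: atLeast0LessThan mult.commute)
qed simp

lemma block_index_bounds:
  fixes i q l :: nat
  assumes "i < q * l"
  shows "i div q < l" "i mod q < q"
proof -
  have "q > 0" using assms by (cases q) auto
  then show "i div q < l" "i mod q < q"
    using assms by (simp_all add: div_less_iff_less_mult mult.commute)
qed

lemma block_index_less:
  fixes b c q l :: nat
  assumes "b < l" "c < q"
  shows "b * q + c < q * l"
proof -
  have "b * q + c < Suc b * q" using assms(2) by simp
  also have "\<dots> \<le> q * l" using assms(1) by (metis Suc_leI mult.commute mult_le_mono1)
  finally show ?thesis .
qed

lemma next_block_same_offset_iff:
  fixes i j q :: nat
  assumes "q > 0"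
  shows "(j div q = i div q + 1 \<and> j mod q = i mod q) \<longleftrightarrow> j = i + q"
proof
  assume "j div q = i div q + 1 \<and> j mod q = i mod q"
  then have "j = (i div q + 1) * q + i mod q" by (metis div_mult_mod_eq)
  then show "j = i + q" by (simp add: algebra_simps)
qed (use assms in simp)

lemma last_block_index:
  fixes i q l :: nat
  assumes "i < q * l"
  shows "q * l - q \<le> i \<longleftrightarrow> Suc (i div q) = l"
    and "q * l - q \<le> i \<Longrightarrow> i - (q * l - q) = i mod q"
proof -
  have q: "q > 0" and "l > 0" using assms by (auto intro!: Nat.gr0I)
  then obtain l' where l: "l = Suc l'" using gr0_implies_Suc by blast
  have l'q: "q * l - q = l' * q" by (simp add: l)
  have "l' * q \<le> i \<longleftrightarrow> l' \<le> i div q" by (rule less_eq_div_iff_mult_less_eq[OF q, symmetric])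
  moreover have "i div q < l" using block_index_bounds(1)[OF assms] .
  ultimately show iff: "q * l - q \<le> i \<longleftrightarrow> Suc (i div q) = l"
    unfolding l'q using l by auto
  assume "q * l - q \<le> i"
  then have "i div q = l'" using iff l by simp
  then show "i - (q * l - q) = i mod q"
    using l'q by (metis add_diff_cancel_left' div_mult_mod_eq)
qed

lemma index_mult_mat_vec_sum:
  assumes "M \<in> carrier_mat r c" "v \<in> carrier_vec c" "i < r"
  shows "(M *\<^sub>v v) $ i = (\<Sum>j<c. M $$ (i, j) * v $ j)"
  using assms by (simp add: scalar_prod_def atLeast0LessThan)

lemma index_mult_mat_vec_delta:
  fixes M :: "'a::semiring_1 mat"
  assumes "M \<in> carrier_mat r c" "i < r" "v \<in> carrier_vec c"
    and "\<And>j. j < c \<Longrightarrow> M $$ (i, j) = (if P \<and> j = t then 1 else 0)"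
  shows "(M *\<^sub>v v) $ i = (if P \<and> t < c then v $ t else 0)"
proof -
  have "(M *\<^sub>v v) $ i = (\<Sum>j<c. M $$ (i, j) * v $ j)"
    by (rule index_mult_mat_vec_sum[OF assms(1,3,2)])
  also have "\<dots> = (\<Sum>j<c. if P \<and> j = t then v $ t else 0)"
    by (intro sum.cong) (simp_all add: assms(4))
  finally show ?thesis by (cases P) simp_all
qed

lemma mult_mat_vec_hconcat:
  assumes "M1 \<in> carrier_mat r c1" "M2 \<in> carrier_mat r c2" "a \<in> carrier_vec c1" "b \<in> carrier_vec c2"
  shows "mat r (c1 + c2) (\<lambda>(i, j). if j < c1 then M1 $$ (i, j) else M2 $$ (i, j - c1)) *\<^sub>v (a @\<^sub>v b)
    = M1 *\<^sub>v a + M2 *\<^sub>v b"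
proof (rule eq_vecI)
  fix i assume "i < dim_vec (M1 *\<^sub>v a + M2 *\<^sub>v b)"
  then have i: "i < r" using assms by simp
  have "row (mat r (c1 + c2) (\<lambda>(i, j). if j < c1 then M1 $$ (i, j) else M2 $$ (i, j - c1))) i
      = row M1 i @\<^sub>v row M2 i"
    using assms i by (intro eq_vecI) auto
  moreover have "(row M1 i @\<^sub>v row M2 i) \<bullet> (a @\<^sub>v b) = row M1 i \<bullet> a + row M2 i \<bullet> b"
    using assms i by (intro scalar_prod_append) auto
  ultimately show "(mat r (c1 + c2) (\<lambda>(i, j). if j < c1 then M1 $$ (i, j) else M2 $$ (i, j - c1))
      *\<^sub>v (a @\<^sub>v b)) $ i = (M1 *\<^sub>v a + M2 *\<^sub>v b) $ i"
    using assms i by simp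
qed (use assms in simp)

lemma pow_mat_Suc_left:
  assumes "A \<in> carrier_mat n n"
  shows "A * A ^\<^sub>m k = A ^\<^sub>m Suc k"
proof (induction k)
  case (Suc k)
  have "A * A ^\<^sub>m Suc k = (A * A ^\<^sub>m k) * A"
    using assms by (simp add: assoc_mult_mat[of A n n _ n _ n])
  then show ?case using Suc by simp
qed (use assms in simp)

definition stack_vec :: "nat \<Rightarrow> nat \<Rightarrow> (nat \<Rightarrow> 'a vec) \<Rightarrow> 'a vec" where
  "stack_vec q l f = vec (q * l) (\<lambda>i. f (i div q) $ (i mod q))"

lemma stack_vec_carrier [simp]: "stack_vec q l f \<in> carrier_vec (q * l)"
  and dim_stack_vec [simp]: "dim_vec (stack_vec q l f) = q * l"
  by (simp_all add: stack_vec_def)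

lemma index_stack_vec_block:
  assumes "b < l" "c < q"
  shows "stack_vec q l f $ (b * q + c) = f b $ c"
  using assms block_index_less by (simp add: stack_vec_def)

lemma stack_vec_cong:
  assumes "\<And>j c. j < l \<Longrightarrow> c < q \<Longrightarrow> f j $ c = g j $ c"
  shows "stack_vec q l f = stack_vec q l g"
  unfolding stack_vec_def by (rule eq_vecI) (auto simp: assms block_index_bounds)

lemma stack_vec_add:
  assumes "\<And>j. j < l \<Longrightarrow> f j \<in> carrier_vec q" "\<And>j. j < l \<Longrightarrow> g j \<in> carrier_vec q"
  shows "stack_vec q l f + stack_vec q l g = stack_vec q l (\<lambda>j. f j + g j)"
proof (rule eq_vecI)
  fix i assume "i < dim_vec (stack_vec q l (\<lambda>j. f j + g j))"
  then have i: "i < q * l" by simp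
  then have "g (i div q) \<in> carrier_vec q" using assms(2) block_index_bounds(1) by blast
  with i show "(stack_vec q l f + stack_vec q l g) $ i = stack_vec q l (\<lambda>j. f j + g j) $ i"
    by (simp add: stack_vec_def block_index_bounds)
qed simp

lemma mult_mat_vec_stack_vec:
  assumes "M \<in> carrier_mat r (q * l)" "i < r"
  shows "(M *\<^sub>v stack_vec q l f) $ i = (\<Sum>b<l. \<Sum>c<q. M $$ (i, b * q + c) * f b $ c)"
proof -
  have "(M *\<^sub>v stack_vec q l f) $ i = (\<Sum>j<q * l. M $$ (i, j) * stack_vec q l f $ j)"
    by (rule index_mult_mat_vec_sum[OF assms(1) stack_vec_carrier assms(2)])
  also have "\<dots> = (\<Sum>b<l. \<Sum>c<q. M $$ (i, b * q + c) * stack_vec q l f $ (b * q + c))"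
    by (rule sum_lessThan_mult)
  also have "\<dots> = (\<Sum>b<l. \<Sum>c<q. M $$ (i, b * q + c) * f b $ c)"
    by (intro sum.cong refl) (simp add: index_stack_vec_block)
  finally show ?thesis .
qed

lemma past_window_eq_append:
  "past_window p m l y u k = stack_vec p l (\<lambda>j. y (k - l + j)) @\<^sub>v stack_vec m l (\<lambda>j. u (k - l + j))"
proof (rule eq_vecI)
  fix i assume "i < dim_vec (stack_vec p l (\<lambda>j. y (k - l + j)) @\<^sub>v stack_vec m l (\<lambda>j. u (k - l + j)))"
  then show "past_window p m l y u k $ i
      = (stack_vec p l (\<lambda>j. y (k - l + j)) @\<^sub>v stack_vec m l (\<lambda>j. u (k - l + j))) $ i"
    by (cases "i < p * l") (simp_all add: past_window_def stack_vec_def)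
qed (simp add: past_window_def)

fun trajectory :: "'a::semiring_0 mat \<Rightarrow> 'a mat \<Rightarrow> 'a vec \<Rightarrow> (nat \<Rightarrow> 'a vec) \<Rightarrow> nat \<Rightarrow> 'a vec" where
  "trajectory A B x0 u 0 = x0"
| "trajectory A B x0 u (Suc k) = A *\<^sub>v trajectory A B x0 u k + B *\<^sub>v u k"

lemma trajectory_unique:
  assumes "x 0 = x0" "\<And>k. x (Suc k) = A *\<^sub>v x k + B *\<^sub>v u k"
  shows "x = trajectory A B x0 u"
proof
  fix k show "x k = trajectory A B x0 u k"
    by (induction k) (simp_all add: assms)
qed

lemma trajectory_shift:
  "trajectory A B x0 u (s + j) = trajectory A B (trajectory A B x0 u s) (\<lambda>i. u (s + i)) j"
  by (induction j) simp_all

lemma obs_mat_carrier: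
  "A \<in> carrier_mat n n \<Longrightarrow> C \<in> carrier_mat p n \<Longrightarrow> obs_mat A C l \<in> carrier_mat (p * l) n"
  by (simp add: obs_mat_def)

lemma toeplitz_mat_carrier:
  "B \<in> carrier_mat n m \<Longrightarrow> C \<in> carrier_mat p n \<Longrightarrow> toeplitz_mat A B C l \<in> carrier_mat (p * l) (m * l)"
  by (simp add: toeplitz_mat_def)

lemma reach_mat_carrier: "B \<in> carrier_mat n m \<Longrightarrow> reach_mat A B l \<in> carrier_mat n (m * l)"
  by (simp add: reach_mat_def)

lemma obs_mat_mult_vec:
  assumes "A \<in> carrier_mat n n" "C \<in> carrier_mat p n" "x \<in> carrier_vec n"
  shows "obs_mat A C l *\<^sub>v x = stack_vec p l (\<lambda>j. C * A ^\<^sub>m j *\<^sub>v x)"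
proof (rule eq_vecI)
  fix i assume "i < dim_vec (stack_vec p l (\<lambda>j. C * A ^\<^sub>m j *\<^sub>v x))"
  then have i: "i < p * l" by simp
  then have "i mod p < p" by (simp add: block_index_bounds)
  moreover have "row (obs_mat A C l) i = row (C * A ^\<^sub>m (i div p)) (i mod p)"
  proof -
    have CA: "C * A ^\<^sub>m (i div p) \<in> carrier_mat p n" using assms by simp
    show ?thesis
      using assms i \<open>i mod p < p\<close> carrier_matD[OF CA]
      by (intro eq_vecI) (simp_all add: obs_mat_def del: index_mult_mat)
  qed
  ultimately show "(obs_mat A C l *\<^sub>v x) $ i = stack_vec p l (\<lambda>j. C * A ^\<^sub>m j *\<^sub>v x) $ i"
    using assms i by (simp add: obs_mat_def stack_vec_def)
qed (use assms in \<open>simp add: obs_mat_def\<close>)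

lemma Z_mat_mult_append:
  assumes A: "A \<in> carrier_mat n n" and B: "B \<in> carrier_mat n m" and C: "C \<in> carrier_mat p n" and OL: "OL \<in> carrier_mat n (p * l)"
    and y: "y \<in> carrier_vec (p * l)" and v: "v \<in> carrier_vec (m * l)"
  shows "Z_mat A B C OL l *\<^sub>v (y @\<^sub>v v) = (C * A ^\<^sub>m l * OL) *\<^sub>v y
    + (C * reach_mat A B l - C * A ^\<^sub>m l * OL * toeplitz_mat A B C l) *\<^sub>v v"
proof -
  have GOL: "C * A ^\<^sub>m l * OL \<in> carrier_mat p (p * l)"
    using mult_carrier_mat[OF mult_carrier_mat[OF C pow_carrier_mat[OF A]] OL] .
  moreover have "C * reach_mat A B l - C * A ^\<^sub>m l * OL * toeplitz_mat A B C l \<in> carrier_mat p (m * l)"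
    using mult_carrier_mat[OF GOL toeplitz_mat_carrier[OF B C]] by (rule minus_carrier_mat)
  ultimately show ?thesis
    using B C y v unfolding Z_mat_def Let_def carrier_matD[OF C] carrier_matD[OF B]
    by (simp add: mult_mat_vec_hconcat)
qed

lemma Z_mat_mult_window:
  assumes A: "A \<in> carrier_mat n n" and B: "B \<in> carrier_mat n m" and C: "C \<in> carrier_mat p n"
    and OL: "OL \<in> carrier_mat n (p * l)" and left_inverse: "OL * obs_mat A C l = 1\<^sub>m n"
    and x: "x \<in> carrier_vec n" and v: "v \<in> carrier_vec (m * l)"
  shows "Z_mat A B C OL l *\<^sub>v ((obs_mat A C l *\<^sub>v x + toeplitz_mat A B C l *\<^sub>v v) @\<^sub>v v)
    = C *\<^sub>v (A ^\<^sub>m l *\<^sub>v x + reach_mat A B l *\<^sub>v v)"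
proof -
  let ?G = "C * A ^\<^sub>m l" and ?O = "obs_mat A C l" and ?T = "toeplitz_mat A B C l"
    and ?R = "reach_mat A B l"
  define z where "z = OL *\<^sub>v (?T *\<^sub>v v)"
  have G: "?G \<in> carrier_mat p n" using A C by simp
  have O: "?O \<in> carrier_mat (p * l) n" by (rule obs_mat_carrier[OF A C])
  have T: "?T \<in> carrier_mat (p * l) (m * l)" by (rule toeplitz_mat_carrier[OF B C])
  have R: "?R \<in> carrier_mat n (m * l)" by (rule reach_mat_carrier[OF B])
  have Tv: "?T *\<^sub>v v \<in> carrier_vec (p * l)" using T v by simp
  have z: "z \<in> carrier_vec n" unfolding z_def using OL Tv by simp
  have Rv: "?R *\<^sub>v v \<in> carrier_vec n" using R v by simp
  have "OL *\<^sub>v (?O *\<^sub>v x + ?T *\<^sub>v v) = (OL * ?O) *\<^sub>v x + z"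
    unfolding z_def using O OL x Tv by (simp add: mult_add_distrib_mat_vec assoc_mult_mat_vec)
  then have recovered_state: "OL *\<^sub>v (?O *\<^sub>v x + ?T *\<^sub>v v) = x + z"
    using left_inverse x by simp
  have "Z_mat A B C OL l *\<^sub>v ((?O *\<^sub>v x + ?T *\<^sub>v v) @\<^sub>v v)
      = (?G * OL) *\<^sub>v (?O *\<^sub>v x + ?T *\<^sub>v v) + (C * ?R - ?G * OL * ?T) *\<^sub>v v"
    using O x Tv v by (intro Z_mat_mult_append[OF A B C OL]) simp_all
  also have "(?G * OL) *\<^sub>v (?O *\<^sub>v x + ?T *\<^sub>v v) = ?G *\<^sub>v x + ?G *\<^sub>v z"
    using G OL O x Tv z
    by (simp add: assoc_mult_mat_vec recovered_state mult_add_distrib_mat_vec)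
  also have "(C * ?R - ?G * OL * ?T) *\<^sub>v v = C *\<^sub>v (?R *\<^sub>v v) - ?G *\<^sub>v z"
  proof -
    have "(C * ?R - ?G * OL * ?T) *\<^sub>v v = (C * ?R) *\<^sub>v v - (?G * OL * ?T) *\<^sub>v v"
      by (rule minus_mult_distrib_mat_vec[OF mult_carrier_mat[OF C R]
          mult_carrier_mat[OF mult_carrier_mat[OF G OL] T] v])
    also have "(?G * OL * ?T) *\<^sub>v v = (?G * OL) *\<^sub>v (?T *\<^sub>v v)"
      by (rule assoc_mult_mat_vec[OF mult_carrier_mat[OF G OL] T v])
    also have "\<dots> = ?G *\<^sub>v z"
      unfolding z_def by (rule assoc_mult_mat_vec[OF G OL Tv])
    finally show ?thesis using C R v by (simp add: assoc_mult_mat_vec)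
  qed
  also have "?G *\<^sub>v x + ?G *\<^sub>v z + (C *\<^sub>v (?R *\<^sub>v v) - ?G *\<^sub>v z) = ?G *\<^sub>v x + C *\<^sub>v (?R *\<^sub>v v)"
    using mult_mat_vec_carrier[OF G x] mult_mat_vec_carrier[OF G z] mult_mat_vec_carrier[OF C Rv]
    by (intro eq_vecI) simp_all
  also have "\<dots> = C *\<^sub>v (A ^\<^sub>m l *\<^sub>v x + ?R *\<^sub>v v)"
    using mult_mat_vec_carrier[OF pow_carrier_mat[OF A] x]
    by (simp add: mult_add_distrib_mat_vec[OF C _ Rv] assoc_mult_mat_vec[OF C pow_carrier_mat[OF A] x])
  finally show ?thesis .
qed

context
  fixes A B :: "real mat" and u :: "nat \<Rightarrow> real vec" and n m :: nat
  assumes A: "A \<in> carrier_mat n n" and B: "B \<in> carrier_mat n m" and u: "\<And>k. u k \<in> carrier_vec m"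
begin

lemma trajectory_carrier: "x0 \<in> carrier_vec n \<Longrightarrow> trajectory A B x0 u k \<in> carrier_vec n"
  by (induction k) (use A B u in auto)

lemma trajectory_superposition:
  assumes x0: "x0 \<in> carrier_vec n"
  shows "trajectory A B x0 u k = A ^\<^sub>m k *\<^sub>v x0 + trajectory A B (0\<^sub>v n) u k"
proof (induction k)
  case 0
  show ?case using A x0 by simp
next
  case (Suc k)
  let ?z = "trajectory A B (0\<^sub>v n) u k"
  have Akx: "A ^\<^sub>m k *\<^sub>v x0 \<in> carrier_vec n" by (rule mult_mat_vec_carrier[OF pow_carrier_mat[OF A] x0])
  have z: "?z \<in> carrier_vec n" by (simp add: trajectory_carrier)
  have "trajectory A B x0 u (Suc k) = A *\<^sub>v (A ^\<^sub>m k *\<^sub>v x0 + ?z) + B *\<^sub>v u k"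
    using Suc by simp
  also have "\<dots> = A *\<^sub>v (A ^\<^sub>m k *\<^sub>v x0) + (A *\<^sub>v ?z + B *\<^sub>v u k)"
    using mult_mat_vec_carrier[OF A Akx] mult_mat_vec_carrier[OF A z] mult_mat_vec_carrier[OF B u]
    by (simp add: mult_add_distrib_mat_vec[OF A Akx z] assoc_add_vec)
  also have "A *\<^sub>v (A ^\<^sub>m k *\<^sub>v x0) = A ^\<^sub>m Suc k *\<^sub>v x0"
    by (simp add: assoc_mult_mat_vec[OF A pow_carrier_mat[OF A] x0, symmetric] pow_mat_Suc_left[OF A]
        del: pow_mat.simps)
  finally show ?case by simp
qed

lemma zero_state_response_index:
  assumes "M \<in> carrier_mat r n" "i < r"
  shows "(M *\<^sub>v trajectory A B (0\<^sub>v n) u k) $ i = (\<Sum>b<k. (M * A ^\<^sub>m (k - 1 - b) * B *\<^sub>v u b) $ i)"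
  using assms(1)
proof (induction k arbitrary: M)
  case 0
  then show ?case using assms(2) by simp
next
  case (Suc k)
  let ?z = "trajectory A B (0\<^sub>v n) u k"
  have z: "?z \<in> carrier_vec n" by (simp add: trajectory_carrier)
  have MA: "M * A \<in> carrier_mat r n" using Suc.prems A by simp
  have "M *\<^sub>v trajectory A B (0\<^sub>v n) u (Suc k) = M *\<^sub>v (A *\<^sub>v ?z) + M *\<^sub>v (B *\<^sub>v u k)"
    using mult_mat_vec_carrier[OF A z] mult_mat_vec_carrier[OF B u]
    by (simp add: mult_add_distrib_mat_vec[OF Suc.prems])
  also have "\<dots> = (M * A) *\<^sub>v ?z + (M * B) *\<^sub>v u k"
    by (simp add: assoc_mult_mat_vec[OF Suc.prems A z] assoc_mult_mat_vec[OF Suc.prems B u])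
  finally have "(M *\<^sub>v trajectory A B (0\<^sub>v n) u (Suc k)) $ i
      = (\<Sum>b<k. (M * A * A ^\<^sub>m (k - 1 - b) * B *\<^sub>v u b) $ i) + (M * B *\<^sub>v u k) $ i"
    using Suc.IH[OF MA] Suc.prems B assms(2) by simp
  also have "(\<Sum>b<k. (M * A * A ^\<^sub>m (k - 1 - b) * B *\<^sub>v u b) $ i)
      = (\<Sum>b<k. (M * A ^\<^sub>m (Suc k - 1 - b) * B *\<^sub>v u b) $ i)"
  proof (intro sum.cong refl)
    fix b assume "b \<in> {..<k}"
    then have "Suc (k - 1 - b) = Suc k - 1 - b" by auto
    then have "M * A * A ^\<^sub>m (k - 1 - b) = M * A ^\<^sub>m (Suc k - 1 - b)"
      using assoc_mult_mat[OF Suc.prems A pow_carrier_mat[OF A]] pow_mat_Suc_left[OF A]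
      by (simp del: pow_mat.simps)
    then show "(M * A * A ^\<^sub>m (k - 1 - b) * B *\<^sub>v u b) $ i = (M * A ^\<^sub>m (Suc k - 1 - b) * B *\<^sub>v u b) $ i"
      by simp
  qed
  also have "(M * B *\<^sub>v u k) $ i = (M * A ^\<^sub>m (Suc k - 1 - k) * B *\<^sub>v u k) $ i"
    using Suc.prems A by simp
  finally show ?case by simp
qed

lemma toeplitz_mat_mult_stack_vec:
  assumes C: "C \<in> carrier_mat p n"
  shows "toeplitz_mat A B C l *\<^sub>v stack_vec m l u = stack_vec p l (\<lambda>j. C *\<^sub>v trajectory A B (0\<^sub>v n) u j)"
proof (rule eq_vecI)
  fix i assume "i < dim_vec (stack_vec p l (\<lambda>j. C *\<^sub>v trajectory A B (0\<^sub>v n) u j))"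
  then have i: "i < p * l" by simp
  define q r where "q = i div p" and "r = i mod p"
  have q: "q < l" and r: "r < p" using block_index_bounds[OF i] by (simp_all add: q_def r_def)
  let ?G = "\<lambda>b. C * A ^\<^sub>m (q - 1 - b) * B"
  have G: "?G b \<in> carrier_mat p m" for b
    using mult_carrier_mat[OF mult_carrier_mat[OF C pow_carrier_mat[OF A]] B] .
  have T: "toeplitz_mat A B C l \<in> carrier_mat (p * l) (m * l)"
    by (rule toeplitz_mat_carrier[OF B C])
  have "(toeplitz_mat A B C l *\<^sub>v stack_vec m l u) $ i
      = (\<Sum>b<l. \<Sum>c<m. toeplitz_mat A B C l $$ (i, b * m + c) * u b $ c)"
    by (rule mult_mat_vec_stack_vec[OF T i])
  also have "\<dots> = (\<Sum>b<l. if b < q then (?G b *\<^sub>v u b) $ r else 0)"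
  proof (intro sum.cong refl)
    fix b assume "b \<in> {..<l}"
    then have "toeplitz_mat A B C l $$ (i, b * m + c) = (if b < q then ?G b $$ (r, c) else 0)"
      if "c < m" for c
      using that B C i block_index_less[of b l c m]
      by (simp add: toeplitz_mat_def q_def r_def Let_def diff_commute)
    then show "(\<Sum>c<m. toeplitz_mat A B C l $$ (i, b * m + c) * u b $ c)
        = (if b < q then (?G b *\<^sub>v u b) $ r else 0)"
      using index_mult_mat_vec_sum[OF G u r] by simp
  qed
  also have "\<dots> = (\<Sum>b<q. (?G b *\<^sub>v u b) $ r)"
    by (rule sum.mono_neutral_cong_right) (use q in auto)
  also have "\<dots> = (C *\<^sub>v trajectory A B (0\<^sub>v n) u q) $ r"
    by (rule zero_state_response_index[OF C r, symmetric])
  finally show "(toeplitz_mat A B C l *\<^sub>v stack_vec m l u) $ i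
      = stack_vec p l (\<lambda>j. C *\<^sub>v trajectory A B (0\<^sub>v n) u j) $ i"
    using i by (simp add: stack_vec_def q_def r_def)
qed (use B C in \<open>simp add: toeplitz_mat_def\<close>)

lemma reach_mat_mult_stack_vec:
  "reach_mat A B l *\<^sub>v stack_vec m l u = trajectory A B (0\<^sub>v n) u l"
proof (rule eq_vecI)
  have z: "trajectory A B (0\<^sub>v n) u l \<in> carrier_vec n" by (simp add: trajectory_carrier)
  then show "dim_vec (reach_mat A B l *\<^sub>v stack_vec m l u) = dim_vec (trajectory A B (0\<^sub>v n) u l)"
    using B by (simp add: reach_mat_def)
  fix i assume "i < dim_vec (trajectory A B (0\<^sub>v n) u l)"
  then have i: "i < n" using z by simp
  let ?G = "\<lambda>b. A ^\<^sub>m (l - 1 - b) * B"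
  have G: "?G b \<in> carrier_mat n m" for b
    using mult_carrier_mat[OF pow_carrier_mat[OF A] B] .
  have R: "reach_mat A B l \<in> carrier_mat n (m * l)"
    by (rule reach_mat_carrier[OF B])
  have "(reach_mat A B l *\<^sub>v stack_vec m l u) $ i
      = (\<Sum>b<l. \<Sum>c<m. reach_mat A B l $$ (i, b * m + c) * u b $ c)"
    by (rule mult_mat_vec_stack_vec[OF R i])
  also have "\<dots> = (\<Sum>b<l. (?G b *\<^sub>v u b) $ i)"
  proof (intro sum.cong refl)
    fix b assume "b \<in> {..<l}"
    then have "reach_mat A B l $$ (i, b * m + c) = ?G b $$ (i, c)" if "c < m" for c
      using that B i block_index_less[of b l c m] by (simp add: reach_mat_def)
    then show "(\<Sum>c<m. reach_mat A B l $$ (i, b * m + c) * u b $ c) = (?G b *\<^sub>v u b) $ i"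
      using index_mult_mat_vec_sum[OF G u i] by simp
  qed
  also have "\<dots> = (1\<^sub>m n *\<^sub>v trajectory A B (0\<^sub>v n) u l) $ i"
    using zero_state_response_index[OF one_carrier_mat i] A B by simp
  finally show "(reach_mat A B l *\<^sub>v stack_vec m l u) $ i = trajectory A B (0\<^sub>v n) u l $ i"
    using z by simp
qed

lemma stacked_outputs:
  assumes C: "C \<in> carrier_mat p n" and x0: "x0 \<in> carrier_vec n"
  shows "stack_vec p l (\<lambda>j. C *\<^sub>v trajectory A B x0 u j)
    = obs_mat A C l *\<^sub>v x0 + toeplitz_mat A B C l *\<^sub>v stack_vec m l u"
proof -
  have response: "C * A ^\<^sub>m j *\<^sub>v x0 + C *\<^sub>v trajectory A B (0\<^sub>v n) u j = C *\<^sub>v trajectory A B x0 u j"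
    for j
  proof -
    have "A ^\<^sub>m j *\<^sub>v x0 \<in> carrier_vec n" by (rule mult_mat_vec_carrier[OF pow_carrier_mat[OF A] x0])
    moreover have "trajectory A B (0\<^sub>v n) u j \<in> carrier_vec n" by (simp add: trajectory_carrier)
    ultimately show ?thesis
      by (simp add: trajectory_superposition[OF x0] mult_add_distrib_mat_vec[OF C]
          assoc_mult_mat_vec[OF C pow_carrier_mat[OF A] x0])
  qed
  have "obs_mat A C l *\<^sub>v x0 + toeplitz_mat A B C l *\<^sub>v stack_vec m l u
      = stack_vec p l (\<lambda>j. C * A ^\<^sub>m j *\<^sub>v x0) + stack_vec p l (\<lambda>j. C *\<^sub>v trajectory A B (0\<^sub>v n) u j)"
    by (simp add: obs_mat_mult_vec[OF A C x0] toeplitz_mat_mult_stack_vec[OF C])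
  also have "\<dots> = stack_vec p l (\<lambda>j. C * A ^\<^sub>m j *\<^sub>v x0 + C *\<^sub>v trajectory A B (0\<^sub>v n) u j)"
    using mult_mat_vec_carrier[OF mult_carrier_mat[OF C pow_carrier_mat[OF A]] x0]
      mult_mat_vec_carrier[OF C trajectory_carrier]
    by (intro stack_vec_add) simp_all
  also have "\<dots> = stack_vec p l (\<lambda>j. C *\<^sub>v trajectory A B x0 u j)"
    by (simp only: response)
  finally show ?thesis by simp
qed

lemma output_eq_Z_mult_window:
  assumes C: "C \<in> carrier_mat p n" and OL: "OL \<in> carrier_mat n (p * l)"
    and left_inverse: "OL * obs_mat A C l = 1\<^sub>m n" and x0: "x0 \<in> carrier_vec n"
  shows "C *\<^sub>v trajectory A B x0 u l
    = Z_mat A B C OL l *\<^sub>v (stack_vec p l (\<lambda>j. C *\<^sub>v trajectory A B x0 u j) @\<^sub>v stack_vec m l u)"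
proof -
  have "trajectory A B x0 u l = A ^\<^sub>m l *\<^sub>v x0 + reach_mat A B l *\<^sub>v stack_vec m l u"
    by (simp only: trajectory_superposition[OF x0] reach_mat_mult_stack_vec)
  then show ?thesis
    by (simp only: stacked_outputs[OF C x0] Z_mat_mult_window[OF A B C OL left_inverse x0 stack_vec_carrier])
qed

end

lemma shift_mat_mult_stack_vec:
  "shift_mat q l *\<^sub>v stack_vec q l f = stack_vec q l (\<lambda>j. if Suc j < l then f (Suc j) else 0\<^sub>v q)"
proof (rule eq_vecI)
  fix i assume "i < dim_vec (stack_vec q l (\<lambda>j. if Suc j < l then f (Suc j) else 0\<^sub>v q))"
  then have i: "i < q * l" by simp
  then have q: "q > 0" by (auto intro!: Nat.gr0I)
  have S: "shift_mat q l \<in> carrier_mat (q * l) (q * l)" by (simp add: shift_mat_def)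
  have "(shift_mat q l *\<^sub>v stack_vec q l f) $ i
      = (if True \<and> i + q < q * l then stack_vec q l f $ (i + q) else 0)"
    using i q next_block_same_offset_iff[OF q]
    by (intro index_mult_mat_vec_delta[OF S i stack_vec_carrier]) (simp add: shift_mat_def)
  moreover have "i + q < q * l \<longleftrightarrow> Suc (i div q) < l"
    using q by (simp add: div_less_iff_less_mult[symmetric] mult.commute)
  ultimately show "(shift_mat q l *\<^sub>v stack_vec q l f) $ i
      = stack_vec q l (\<lambda>j. if Suc j < l then f (Suc j) else 0\<^sub>v q) $ i"
    using i q by (simp add: stack_vec_def)
qed (simp add: shift_mat_def)

lemma L_mat_mult_vec:
  assumes y: "y \<in> carrier_vec p"
  shows "L_mat p m l *\<^sub>v y = stack_vec p l (\<lambda>j. if Suc j = l then y else 0\<^sub>v p) @\<^sub>v 0\<^sub>v (m * l)"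
proof (rule eq_vecI)
  have L: "L_mat p m l \<in> carrier_mat (p * l + m * l) p" by (simp add: L_mat_def)
  fix i assume "i < dim_vec (stack_vec p l (\<lambda>j. if Suc j = l then y else 0\<^sub>v p) @\<^sub>v 0\<^sub>v (m * l))"
  then have i: "i < p * l + m * l" by simp
  have "(L_mat p m l *\<^sub>v y) $ i
      = (if (p * l - p \<le> i \<and> i < p * l) \<and> i - (p * l - p) < p then y $ (i - (p * l - p)) else 0)"
    using i by (intro index_mult_mat_vec_delta[OF L i y]) (auto simp: L_mat_def)
  then show "(L_mat p m l *\<^sub>v y) $ i
      = (stack_vec p l (\<lambda>j. if Suc j = l then y else 0\<^sub>v p) @\<^sub>v 0\<^sub>v (m * l)) $ i"
    using i y last_block_index[of i p l] block_index_bounds[of i p l] by (auto simp: stack_vec_def)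
qed (simp add: L_mat_def)

lemma Bl_mat_mult_vec:
  assumes v: "v \<in> carrier_vec m"
  shows "Bl_mat p m l *\<^sub>v v = 0\<^sub>v (p * l) @\<^sub>v stack_vec m l (\<lambda>j. if Suc j = l then v else 0\<^sub>v m)"
proof (rule eq_vecI)
  have Bl: "Bl_mat p m l \<in> carrier_mat (p * l + m * l) m" by (simp add: Bl_mat_def)
  fix i assume "i < dim_vec (0\<^sub>v (p * l) @\<^sub>v stack_vec m l (\<lambda>j. if Suc j = l then v else 0\<^sub>v m))"
  then have i: "i < p * l + m * l" by simp
  then have "l > 0" by (auto intro!: Nat.gr0I)
  then have "m \<le> m * l" by simp
  \<comment> \<open>so the truncated subtractions below are exact\<close>
  then have last_rows: "p * l + m * l - m \<le> i \<longleftrightarrow> p * l \<le> i \<and> m * l - m \<le> i - p * l"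
    and offset: "i - (p * l + m * l - m) = (i - p * l) - (m * l - m)"
    by linarith+
  have "(Bl_mat p m l *\<^sub>v v) $ i
      = (if p * l + m * l - m \<le> i \<and> i - (p * l + m * l - m) < m then v $ (i - (p * l + m * l - m)) else 0)"
    using i by (intro index_mult_mat_vec_delta[OF Bl i v]) (auto simp: Bl_mat_def)
  also have "\<dots> = (0\<^sub>v (p * l) @\<^sub>v stack_vec m l (\<lambda>j. if Suc j = l then v else 0\<^sub>v m)) $ i"
  proof (cases "p * l \<le> i")
    case True
    then have i': "i - p * l < m * l" using i by linarith
    show ?thesis
      using True i v last_block_index[OF i'] block_index_bounds[OF i']
      unfolding last_rows offset by (auto simp: stack_vec_def)
  qed (use i last_rows in simp)
  finally show "(Bl_mat p m l *\<^sub>v v) $ i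
      = (0\<^sub>v (p * l) @\<^sub>v stack_vec m l (\<lambda>j. if Suc j = l then v else 0\<^sub>v m)) $ i" .
qed (simp add: Bl_mat_def)

lemma shift_mat_mult_stack_vec_add_last:
  assumes f: "\<And>j. f j \<in> carrier_vec q"
  shows "shift_mat q l *\<^sub>v stack_vec q l f + stack_vec q l (\<lambda>j. if Suc j = l then f l else 0\<^sub>v q)
    = stack_vec q l (\<lambda>j. f (Suc j))"
proof -
  have "shift_mat q l *\<^sub>v stack_vec q l f + stack_vec q l (\<lambda>j. if Suc j = l then f l else 0\<^sub>v q)
      = stack_vec q l (\<lambda>j. (if Suc j < l then f (Suc j) else 0\<^sub>v q) + (if Suc j = l then f l else 0\<^sub>v q))"
    unfolding shift_mat_mult_stack_vec using f by (intro stack_vec_add) auto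
  also have "\<dots> = stack_vec q l (\<lambda>j. f (Suc j))"
    using f by (intro stack_vec_cong) (auto simp: not_less_eq)
  finally show ?thesis .
qed

lemma past_window_step:
  assumes y: "\<And>j. y j \<in> carrier_vec p" and u: "\<And>j. u j \<in> carrier_vec m" and k: "l \<le> k"
  shows "F_mat p m l *\<^sub>v past_window p m l y u k + L_mat p m l *\<^sub>v y k + Bl_mat p m l *\<^sub>v u k
    = past_window p m l y u (Suc k)"
proof -
  let ?Y = "stack_vec p l (\<lambda>j. y (k - l + j))" and ?U = "stack_vec m l (\<lambda>j. u (k - l + j))"
  let ?last_y = "stack_vec p l (\<lambda>j. if Suc j = l then y k else 0\<^sub>v p)"
    and ?last_u = "stack_vec m l (\<lambda>j. if Suc j = l then u k else 0\<^sub>v m)"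
  have S: "shift_mat q l \<in> carrier_mat (q * l) (q * l)" for q by (simp add: shift_mat_def)
  have "F_mat p m l *\<^sub>v past_window p m l y u k = shift_mat p l *\<^sub>v ?Y @\<^sub>v shift_mat m l *\<^sub>v ?U"
    unfolding F_mat_def past_window_eq_append by (rule mult_mat_vec_split[OF S S]) simp_all
  moreover have "(shift_mat p l *\<^sub>v ?Y @\<^sub>v shift_mat m l *\<^sub>v ?U) + (?last_y @\<^sub>v 0\<^sub>v (m * l))
      + (0\<^sub>v (p * l) @\<^sub>v ?last_u)
      = (shift_mat p l *\<^sub>v ?Y + ?last_y) @\<^sub>v (shift_mat m l *\<^sub>v ?U + ?last_u)"
    using S[of p] S[of m]
    by (simp add: append_vec_add[where n = "p * l" and m = "m * l"])
  ultimately have "F_mat p m l *\<^sub>v past_window p m l y u k + L_mat p m l *\<^sub>v y k + Bl_mat p m l *\<^sub>v u k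
      = (shift_mat p l *\<^sub>v ?Y + ?last_y) @\<^sub>v (shift_mat m l *\<^sub>v ?U + ?last_u)"
    by (simp add: L_mat_mult_vec[OF y] Bl_mat_mult_vec[OF u])
  also have "\<dots> = stack_vec p l (\<lambda>j. y (Suc k - l + j)) @\<^sub>v stack_vec m l (\<lambda>j. u (Suc k - l + j))"
    using shift_mat_mult_stack_vec_add_last[of "\<lambda>j. y (k - l + j)" p l]
      shift_mat_mult_stack_vec_add_last[of "\<lambda>j. u (k - l + j)" m l] y u k
    unfolding le_add_diff_inverse2[OF k] by (simp add: Suc_diff_le)
  finally show ?thesis by (simp only: past_window_eq_append)
qed

lemma output_eq_Z_mult_past_window:
  assumes A: "A \<in> carrier_mat n n" and B: "B \<in> carrier_mat n m" and C: "C \<in> carrier_mat p n"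
    and u: "\<And>k. u k \<in> carrier_vec m" and OL: "OL \<in> carrier_mat n (p * l)"
    and left_inverse: "OL * obs_mat A C l = 1\<^sub>m n" and x0: "x0 \<in> carrier_vec n" and k: "l \<le> k"
  shows "C *\<^sub>v trajectory A B x0 u k
    = Z_mat A B C OL l *\<^sub>v past_window p m l (\<lambda>j. C *\<^sub>v trajectory A B x0 u j) u k"
proof -
  define s where "s = k - l"
  let ?x = "trajectory A B x0 u s" and ?u = "\<lambda>i. u (s + i)"
  have x: "?x \<in> carrier_vec n" by (rule trajectory_carrier[OF A B u x0])
  have u': "?u i \<in> carrier_vec m" for i by (rule u)
  have "past_window p m l (\<lambda>j. C *\<^sub>v trajectory A B x0 u j) u k
      = stack_vec p l (\<lambda>j. C *\<^sub>v trajectory A B ?x ?u j) @\<^sub>v stack_vec m l ?u"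
    by (simp add: past_window_eq_append s_def trajectory_shift)
  moreover have "trajectory A B x0 u k = trajectory A B ?x ?u l"
    using trajectory_shift[of A B x0 u s l] k by (simp add: s_def)
  ultimately show ?thesis
    using output_eq_Z_mult_window[OF A B u' C OL left_inverse x] by simp
qed

lemma past_window_trajectory_step:
  assumes A: "A \<in> carrier_mat n n" and B: "B \<in> carrier_mat n m" and C: "C \<in> carrier_mat p n"
    and u: "\<And>k. u k \<in> carrier_vec m" and OL: "OL \<in> carrier_mat n (p * l)"
    and left_inverse: "OL * obs_mat A C l = 1\<^sub>m n" and x0: "x0 \<in> carrier_vec n" and k: "l \<le> k"
  defines "w \<equiv> past_window p m l (\<lambda>j. C *\<^sub>v trajectory A B x0 u j) u"
  shows "Al_mat A B C OL l *\<^sub>v w k + Bl_mat p m l *\<^sub>v u k = w (Suc k)"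
proof -
  have Z: "Z_mat A B C OL l \<in> carrier_mat p (p * l + m * l)"
    using B C by (simp add: Z_mat_def Let_def)
  have L: "L_mat p m l \<in> carrier_mat (p * l + m * l) p" by (simp add: L_mat_def)
  have F: "F_mat p m l \<in> carrier_mat (p * l + m * l) (p * l + m * l)"
    by (simp add: F_mat_def shift_mat_def)
  have wk: "w k \<in> carrier_vec (p * l + m * l)" by (simp add: w_def past_window_def)
  have "Al_mat A B C OL l *\<^sub>v w k = F_mat p m l *\<^sub>v w k + L_mat p m l *\<^sub>v (Z_mat A B C OL l *\<^sub>v w k)"
    unfolding Al_mat_def carrier_matD[OF B] carrier_matD[OF C]
    using F L Z wk by (simp add: add_mult_distrib_mat_vec)
  also have "Z_mat A B C OL l *\<^sub>v w k = C *\<^sub>v trajectory A B x0 u k"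
    unfolding w_def by (rule output_eq_Z_mult_past_window[OF A B C u OL left_inverse x0 k, symmetric])
  finally show ?thesis
    using past_window_step[of "\<lambda>j. C *\<^sub>v trajectory A B x0 u j" p u m l k]
      C trajectory_carrier[OF A B u x0] u k
    unfolding w_def by simp
qed

theorem lemma3:
  fixes A B C OL :: "real mat" and n m p :: nat
    and xhat :: "real vec" and u :: "nat \<Rightarrow> real vec"
  assumes "A \<in> carrier_mat n n" and "B \<in> carrier_mat n m" and "C \<in> carrier_mat p n"
    and "observable A C"
    and "OL \<in> carrier_mat n (p * obs_index A C)"
    and "OL * obs_mat A C (obs_index A C) = 1\<^sub>m n"
    and "xhat \<in> carrier_vec n"
    and "\<And>k. u k \<in> carrier_vec m"
  shows "\<exists>\<xi>hat. \<forall>x \<xi>.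
    (x 0 = xhat \<and> (\<forall>k. x (Suc k) = A *\<^sub>v x k + B *\<^sub>v u k)) \<longrightarrow>
    (\<xi> (obs_index A C) = \<xi>hat \<and>
       (\<forall>k \<ge> obs_index A C. \<xi> (Suc k) = Al_mat A B C OL (obs_index A C) *\<^sub>v \<xi> k
                                   + Bl_mat p m (obs_index A C) *\<^sub>v u k)) \<longrightarrow>
    (\<forall>k \<ge> obs_index A C.
       \<xi> k = past_window p m (obs_index A C) (\<lambda>j. C *\<^sub>v x j) u k \<and>
       C *\<^sub>v x k = Z_mat A B C OL (obs_index A C) *\<^sub>v \<xi> k)"
proof -
  let ?l = "obs_index A C"
  let ?w = "past_window p m ?l (\<lambda>j. C *\<^sub>v trajectory A B xhat u j) u"
  note setting = assms(1-3,8,5,6,7)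
  show ?thesis
  proof (intro exI[of _ "?w ?l"] allI impI)
    fix x \<xi> :: "nat \<Rightarrow> real vec" and k
    assume x: "x 0 = xhat \<and> (\<forall>k. x (Suc k) = A *\<^sub>v x k + B *\<^sub>v u k)"
      and \<xi>: "\<xi> ?l = ?w ?l \<and> (\<forall>k \<ge> ?l. \<xi> (Suc k) = Al_mat A B C OL ?l *\<^sub>v \<xi> k + Bl_mat p m ?l *\<^sub>v u k)"
      and k: "?l \<le> k"
    have x_eq: "x = trajectory A B xhat u" using x by (intro trajectory_unique) auto
    have "\<xi> k = ?w k" using k
    proof (induction k rule: dec_induct)
      case (step k)
      then show ?case using \<xi> past_window_trajectory_step[OF setting step(1)] by simp
    qed (use \<xi> in simp)
    then show "\<xi> k = past_window p m ?l (\<lambda>j. C *\<^sub>v x j) u k \<and> C *\<^sub>v x k = Z_mat A B C OL ?l *\<^sub>v \<xi> k"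
      using output_eq_Z_mult_past_window[OF setting k] unfolding x_eq by simp
  qed
qed

end
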